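(* Let $Q$ be a finite power associative loop satisfying $(ab^i)b^j=ab^{i+j}$ for all $a,b\in Q$ and all $i,j\in\mathbb Z$. Then the order of every $x\in Q$ divides $|Q|$.
   Context: A loop is a magma with identity in which all left and right translations are bijections; it is power associative if every element generates a subgroup (so powers $b^i$, $i\in\mathbb Z$, are well defined). *)

theory Defs
  imports Main
begin

definition loop :: "'a set \<Rightarrow> ('a \<Rightarrow> 'a \<Rightarrow> 'a) \<Rightarrow> 'a \<Rightarrow> bool" where
  "loop Q m e \<longleftrightarrow>
     (\<forall>a\<in>Q. \<forall>b\<in>Q. m a b \<in> Q) \<and> e \<in> Q \<and>
     (\<forall>a\<in>Q. m e a = a \<and> m a e = a) \<and>
     (\<forall>a\<in>Q. bij_betw (\<lambda>x. m a x) Q Q \<and> bij_betw (\<lambda>x. m x a) Q Q)"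

definition ldiv :: "'a set \<Rightarrow> ('a \<Rightarrow> 'a \<Rightarrow> 'a) \<Rightarrow> 'a \<Rightarrow> 'a \<Rightarrow> 'a" where
  "ldiv Q m a b = (THE y. y \<in> Q \<and> m a y = b)"

definition rdiv :: "'a set \<Rightarrow> ('a \<Rightarrow> 'a \<Rightarrow> 'a) \<Rightarrow> 'a \<Rightarrow> 'a \<Rightarrow> 'a" where
  "rdiv Q m b a = (THE y. y \<in> Q \<and> m y a = b)"

inductive_set subloop_gen :: "'a set \<Rightarrow> ('a \<Rightarrow> 'a \<Rightarrow> 'a) \<Rightarrow> 'a \<Rightarrow> 'a set"
  for Q m x where
  gen: "x \<in> subloop_gen Q m x"
| mult: "a \<in> subloop_gen Q m x \<Longrightarrow> b \<in> subloop_gen Q m x \<Longrightarrow> m a b \<in> subloop_gen Q m x"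
| ldv: "a \<in> subloop_gen Q m x \<Longrightarrow> b \<in> subloop_gen Q m x \<Longrightarrow> ldiv Q m a b \<in> subloop_gen Q m x"
| rdv: "a \<in> subloop_gen Q m x \<Longrightarrow> b \<in> subloop_gen Q m x \<Longrightarrow> rdiv Q m a b \<in> subloop_gen Q m x"

definition power_assoc :: "'a set \<Rightarrow> ('a \<Rightarrow> 'a \<Rightarrow> 'a) \<Rightarrow> bool" where
  "power_assoc Q m \<longleftrightarrow>
     (\<forall>x\<in>Q. \<forall>a\<in>subloop_gen Q m x. \<forall>b\<in>subloop_gen Q m x. \<forall>c\<in>subloop_gen Q m x.
        m (m a b) c = m a (m b c))"

text \<open>Powers (meaningful in a power associative loop): natural powers by
x^0 = e, x^(n+1) = x^n x; negative powers as inverses (computed as e / x^n,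
which is the group inverse inside the subgroup generated by x).\<close>
primrec npow :: "('a \<Rightarrow> 'a \<Rightarrow> 'a) \<Rightarrow> 'a \<Rightarrow> 'a \<Rightarrow> nat \<Rightarrow> 'a" where
  "npow m e x 0 = e"
| "npow m e x (Suc n) = m (npow m e x n) x"

definition ipow :: "'a set \<Rightarrow> ('a \<Rightarrow> 'a \<Rightarrow> 'a) \<Rightarrow> 'a \<Rightarrow> 'a \<Rightarrow> int \<Rightarrow> 'a" where
  "ipow Q m e x i =
     (if 0 \<le> i then npow m e x (nat i) else ldiv Q m (npow m e x (nat (- i))) e)"

definition elem_ord :: "('a \<Rightarrow> 'a \<Rightarrow> 'a) \<Rightarrow> 'a \<Rightarrow> 'a \<Rightarrow> nat" where
  "elem_ord m e x = (LEAST n. 0 < n \<and> npow m e x n = e)"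

end

theory Submission
  imports Defs
begin

(* Lagrange's argument for the cyclic subgroup generated by x, with right cosets replaced by the
   sets a<x> = {a x^k}. The identity (a x^i) x^j = a x^(i+j) makes these sets behave like the
   orbits of an action of the cyclic group of order ord x, so two of them that meet coincide, and
   left cancellation gives each of them exactly ord x elements. Hence Q is partitioned into
   blocks of size ord x. *)

locale finite_right_powers =
  fixes Q :: "'a set" and m :: "'a \<Rightarrow> 'a \<Rightarrow> 'a" and e :: 'a and x :: 'a
  assumes finite_carrier: "finite Q"
    and closed: "\<And>a b. a \<in> Q \<Longrightarrow> b \<in> Q \<Longrightarrow> m a b \<in> Q"
    and neutral_in: "e \<in> Q" and gen_in: "x \<in> Q"
    and left_neutral: "\<And>a. a \<in> Q \<Longrightarrow> m e a = a"
    and right_neutral: "\<And>a. a \<in> Q \<Longrightarrow> m a e = a"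
    and left_cancel: "\<And>a b c. a \<in> Q \<Longrightarrow> b \<in> Q \<Longrightarrow> c \<in> Q \<Longrightarrow> m a b = m a c \<Longrightarrow> b = c"
    and mult_npow_npow:
      "\<And>a i j. a \<in> Q \<Longrightarrow> m (m a (npow m e x i)) (npow m e x j) = m a (npow m e x (i + j))"
begin

abbreviation xpow :: "nat \<Rightarrow> 'a" where "xpow k \<equiv> npow m e x k"

abbreviation ord :: nat where "ord \<equiv> elem_ord m e x"

definition coset :: "'a \<Rightarrow> 'a set" where
  "coset a = range (\<lambda>k. m a (xpow k))"

lemma xpow_in: "xpow k \<in> Q"
  by (induction k) (simp_all add: neutral_in gen_in closed)

lemma xpow_add: "m (xpow i) (xpow j) = xpow (i + j)"
  using mult_npow_npow[OF neutral_in, of i j] by (simp add: left_neutral xpow_in)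

lemma xpow_diff_eq_neutral:
  assumes "i < j" and "xpow i = xpow j"
  shows "xpow (j - i) = e"
proof -
  have "m (xpow i) (xpow (j - i)) = xpow j"
    using xpow_add[of i "j - i"] \<open>i < j\<close> by simp
  also have "\<dots> = m (xpow i) e"
    using assms(2) right_neutral[OF xpow_in] by simp
  finally show ?thesis
    using left_cancel xpow_in neutral_in by blast
qed

lemma ex_xpow_eq_neutral: "\<exists>k>0. xpow k = e"
proof -
  have "finite (range xpow)"
    using finite_subset[OF _ finite_carrier] xpow_in by blast
  then have "\<not> inj xpow"
    using finite_imageD infinite_UNIV_nat by blast
  then obtain i j where "i < j" "xpow i = xpow j"
    using linorder_injI by blast
  then show ?thesis
    using xpow_diff_eq_neutral by (intro exI[of _ "j - i"]) simp
qed

lemma ord_pos: "0 < ord" and xpow_ord: "xpow ord = e"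
  using LeastI_ex[OF ex_xpow_eq_neutral] unfolding elem_ord_def by auto

lemma xpow_neq_neutral: "0 < k \<Longrightarrow> k < ord \<Longrightarrow> xpow k \<noteq> e"
  using not_less_Least unfolding elem_ord_def by blast

lemma inj_on_xpow_lessThan: "inj_on xpow {..<ord}"
proof (rule linorder_inj_onI')
  fix i j assume "i < j" "j \<in> {..<ord}"
  then show "xpow i \<noteq> xpow j"
    using xpow_diff_eq_neutral[of i j] xpow_neq_neutral[of "j - i"] by auto
qed

lemma inj_on_mult_xpow: "a \<in> Q \<Longrightarrow> inj_on (\<lambda>k. m a (xpow k)) {..<ord}"
  using inj_on_xpow_lessThan left_cancel xpow_in unfolding inj_on_def by blast

lemma mult_xpow_mod: "a \<in> Q \<Longrightarrow> m a (xpow k) = m a (xpow (k mod ord))"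
proof (induction k rule: nat_less_induct)
  case (1 k)
  show ?case
  proof (cases "k < ord")
    case False
    then have "m a (xpow k) = m (m a (xpow (k - ord))) (xpow ord)"
      using mult_npow_npow[OF \<open>a \<in> Q\<close>, of "k - ord" ord] by simp
    also have "\<dots> = m a (xpow (k - ord))"
      by (simp add: xpow_ord right_neutral closed xpow_in \<open>a \<in> Q\<close>)
    also have "\<dots> = m a (xpow (k mod ord))"
      using "1" ord_pos False by (simp add: le_mod_geq)
    finally show ?thesis .
  qed simp
qed

lemma coset_eq_image_lessThan:
  assumes "a \<in> Q"
  shows "coset a = (\<lambda>k. m a (xpow k)) ` {..<ord}"
proof -
  have "m a (xpow k) \<in> (\<lambda>k. m a (xpow k)) ` {..<ord}" for k
    using mult_xpow_mod[OF assms, of k] ord_pos by (intro image_eqI[of _ _ "k mod ord"]) simp_all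
  then show ?thesis
    unfolding coset_def by blast
qed

lemma card_coset: "a \<in> Q \<Longrightarrow> card (coset a) = ord"
  by (simp add: coset_eq_image_lessThan card_image inj_on_mult_xpow)

lemma coset_subset: "a \<in> Q \<Longrightarrow> coset a \<subseteq> Q"
  unfolding coset_def using closed xpow_in by auto

lemma mem_coset_self: "a \<in> Q \<Longrightarrow> a \<in> coset a"
  unfolding coset_def using right_neutral by (auto intro: range_eqI[of _ _ 0])

lemma coset_subset_coset: "a \<in> Q \<Longrightarrow> b \<in> coset a \<Longrightarrow> coset b \<subseteq> coset a"
  unfolding coset_def by (auto simp: mult_npow_npow)

lemma coset_eq_coset:
  assumes "a \<in> Q" "b \<in> coset a"
  shows "coset b = coset a"
proof (rule card_subset_eq)
  show "finite (coset a)"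
    using finite_subset[OF coset_subset finite_carrier] \<open>a \<in> Q\<close> .
  show "coset b \<subseteq> coset a"
    using coset_subset_coset[OF assms] .
  have "b \<in> Q"
    using coset_subset assms by blast
  then show "card (coset b) = card (coset a)"
    using card_coset \<open>a \<in> Q\<close> by simp
qed

lemma cosets_disjoint:
  assumes "a \<in> Q" "b \<in> Q" "coset a \<noteq> coset b"
  shows "coset a \<inter> coset b = {}"
proof (rule ccontr)
  assume "coset a \<inter> coset b \<noteq> {}"
  then obtain c where "c \<in> coset a" "c \<in> coset b"
    by blast
  then have "coset c = coset a" "coset c = coset b"
    using coset_eq_coset assms(1,2) by blast+
  with assms(3) show False
    by simp
qed

lemma ord_dvd_card: "ord dvd card Q"
proof -
  have partition: "\<Union>(coset ` Q) = Q"
    using coset_subset mem_coset_self by blast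
  have "ord * card (coset ` Q) = card (\<Union>(coset ` Q))"
  proof (rule card_partition)
    show "c1 \<inter> c2 = {}" if "c1 \<in> coset ` Q" "c2 \<in> coset ` Q" "c1 \<noteq> c2" for c1 c2
      using that cosets_disjoint by blast
  qed (use finite_carrier partition card_coset in auto)
  then show ?thesis
    using partition by (metis dvd_triv_left)
qed

end

lemma loop_left_cancel:
  assumes "loop Q m e" "a \<in> Q" "b \<in> Q" "c \<in> Q" "m a b = m a c"
  shows "b = c"
  using assms unfolding loop_def bij_betw_def inj_on_def by blast

lemma ipow_of_nat: "ipow Q m e x (int k) = npow m e x k"
  unfolding ipow_def by simp

theorem lemma1p10:
  fixes Q :: "'a set" and m :: "'a \<Rightarrow> 'a \<Rightarrow> 'a" and e :: 'a
  assumes "finite Q" and "loop Q m e" and "power_assoc Q m"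
    and "\<forall>a\<in>Q. \<forall>b\<in>Q. \<forall>i j :: int.
           m (m a (ipow Q m e b i)) (ipow Q m e b j) = m a (ipow Q m e b (i + j))"
  shows "\<forall>x\<in>Q. elem_ord m e x dvd card Q"
proof
  fix x assume "x \<in> Q"
  have "finite_right_powers Q m e x"
  proof
    show "b = c" if "a \<in> Q" "b \<in> Q" "c \<in> Q" "m a b = m a c" for a b c
      using loop_left_cancel[OF assms(2) that] .
    show "m (m a (npow m e x i)) (npow m e x j) = m a (npow m e x (i + j))" if "a \<in> Q" for a i j
    proof -
      have "m (m a (ipow Q m e x (int i))) (ipow Q m e x (int j)) = m a (ipow Q m e x (int i + int j))"
        using assms(4) \<open>x \<in> Q\<close> that by blast
      then show ?thesis
        by (simp add: ipow_of_nat flip: of_nat_add)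
    qed
  qed (use assms(1,2) \<open>x \<in> Q\<close> in \<open>simp_all add: loop_def\<close>)
  then show "elem_ord m e x dvd card Q"
    by (rule finite_right_powers.ord_dvd_card)
qed

end
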